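(* Let $\tau$ be a uniformly random permutation of $\{1,\dots,n\}$ and let $S_n$ be the number of steps of the greedy walk from $1$ to $n$ in $G_n$ (as in the context), and $L_n=L_n(\tau)$, $R_n=R_n(\tau)$. Then \[ \mathbb{E}[S_n]=2H_n-2 = 2\log n+2\gamma-2+o(1), \] and \[ \operatorname{Var}(S_n)=2\Bigl(H_n-\sum_{i=1}^n\frac1{i^2}\Bigr)+2\operatorname{Cov}(L_n,R_n)=2\log n+O(1), \] where $H_n=\sum_{i=1}^n 1/i$, $\gamma$ is Euler's constant and $\log$ is the natural logarithm.
   Context: Vertices $V=\{1,\dots,n\}\subset\mathbb{Z}$. A permutation $\tau$ of $V$ gives insertion times: vertex $x$ is inserted at time $\tau(x)$. The undirected graph $G_n$ on $V$ is built as follows: start with no edges; for $t=1,\dots,n$, let $x$ be the vertex with $\tau(x)=t$; if some $y<x$ with $\tau(y)<t$ exists, add an edge between $x$ and the largest such $y$; if some $y>x$ with $\tau(y)<t$ exists, add an edge between $x$ and the smallest such $y$. The greedy walk toward target $n$ starts at $x_0=1$ and, from the current vertex $x\ne n$, moves to the neighbor $y$ of $x$ minimizing $|y-n|$, stopping at $n$; $S_n$ is its number of moves. For a permutation $\sigma$ of $\{1,\dots,n\}$, position $i$ is a left-to-right minimum if $\sigma(i)<\min\{\sigma(1),\dots,\sigma(i-1)\}$ ($i=1$ always is), and a right-to-left minimum if $\sigma(i)<\min\{\sigma(i+1),\dots,\sigma(n)\}$ ($i=n$ always is); $L_n(\sigma)$, $R_n(\sigma)$ count them. *)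

theory Defs
  imports "HOL-Analysis.Analysis" "HOL-Combinatorics.Permutations" "HOL-Library.Landau_Symbols"
begin

text \<open>Vertices are 1..n (as naturals); tau x is the insertion time of vertex x.\<close>

definition perms :: "nat \<Rightarrow> (nat \<Rightarrow> nat) set" where
  "perms n = {\<tau>. \<tau> permutes {1..n}}"

definition inserted_edge :: "nat \<Rightarrow> (nat \<Rightarrow> nat) \<Rightarrow> nat \<Rightarrow> nat \<Rightarrow> bool" where
  "inserted_edge n \<tau> x y \<longleftrightarrow> x \<in> {1..n} \<and> y \<in> {1..n} \<and> \<tau> y < \<tau> x \<and>
     ((y < x \<and> (\<forall>z. y < z \<and> z < x \<longrightarrow> \<not> \<tau> z < \<tau> x)) \<or>
      (x < y \<and> (\<forall>z. x < z \<and> z < y \<longrightarrow> \<not> \<tau> z < \<tau> x)))"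

definition adj :: "nat \<Rightarrow> (nat \<Rightarrow> nat) \<Rightarrow> nat \<Rightarrow> nat \<Rightarrow> bool" where
  "adj n \<tau> x y \<longleftrightarrow> inserted_edge n \<tau> x y \<or> inserted_edge n \<tau> y x"

definition greedy_step :: "nat \<Rightarrow> (nat \<Rightarrow> nat) \<Rightarrow> nat \<Rightarrow> nat" where
  "greedy_step n \<tau> x = (ARG_MIN (\<lambda>y. \<bar>int y - int n\<bar>) y. adj n \<tau> x y)"

definition greedy_steps :: "nat \<Rightarrow> (nat \<Rightarrow> nat) \<Rightarrow> nat" where
  "greedy_steps n \<tau> = (LEAST k. (greedy_step n \<tau> ^^ k) 1 = n)"

definition ltr_minima :: "nat \<Rightarrow> (nat \<Rightarrow> nat) \<Rightarrow> nat" where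
  "ltr_minima n \<sigma> = card {i \<in> {1..n}. \<forall>j \<in> {1..<i}. \<sigma> i < \<sigma> j}"

definition rtl_minima :: "nat \<Rightarrow> (nat \<Rightarrow> nat) \<Rightarrow> nat" where
  "rtl_minima n \<sigma> = card {i \<in> {1..n}. \<forall>j \<in> {i<..n}. \<sigma> i < \<sigma> j}"

definition E_perm :: "nat \<Rightarrow> ((nat \<Rightarrow> nat) \<Rightarrow> real) \<Rightarrow> real" where
  "E_perm n f = (\<Sum>\<tau>\<in>perms n. f \<tau>) / real (card (perms n))"

definition Var_perm :: "nat \<Rightarrow> ((nat \<Rightarrow> nat) \<Rightarrow> real) \<Rightarrow> real" where
  "Var_perm n f = E_perm n (\<lambda>\<tau>. (f \<tau> - E_perm n f)\<^sup>2)"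

definition Cov_perm :: "nat \<Rightarrow> ((nat \<Rightarrow> nat) \<Rightarrow> real) \<Rightarrow> ((nat \<Rightarrow> nat) \<Rightarrow> real) \<Rightarrow> real" where
  "Cov_perm n f g = E_perm n (\<lambda>\<tau>. (f \<tau> - E_perm n f) * (g \<tau> - E_perm n g))"

end

theory Submission
  imports Defs
begin

(*
  The greedy walk only moves to the right. With m the position of the minimum of tau, it
  visits exactly the left-to-right minima of tau up to m and then the right-to-left minima
  from m on, each in increasing order; as m is of both kinds, S_n = L_n + R_n - 2.

  Position i is a left-to-right minimum iff tau attains its minimum over {1..i} at i. By
  a transposition argument this has probability 1/i even conditioned on any event that is
  invariant under permuting the values of tau on {1..i}. Hence the record indicators are
  pairwise independent, within L_n, within R_n, and between a left-to-right minimum at i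
  and a right-to-left minimum at j > i; for j < i the two are incompatible and for j = i
  their conjunction says that i carries the global minimum. This yields the means and
  variances of L_n and R_n and Cov(L_n, R_n) = 1 - sum_{j <= i} 1 / (i (n + 1 - j)),
  which lies in [-1, 1].
*)

definition min_at :: "('a \<Rightarrow> nat) \<Rightarrow> 'a set \<Rightarrow> 'a \<Rightarrow> bool" where
  "min_at \<tau> P p \<longleftrightarrow> (\<forall>q \<in> P - {p}. \<tau> p < \<tau> q)"

lemma ex_min_at:
  assumes "finite P" "P \<noteq> {}" "inj_on \<tau> P"
  obtains p where "p \<in> P" "min_at \<tau> P p"
proof -
  have "Min (\<tau> ` P) \<in> \<tau> ` P" using assms by (intro Min_in) auto
  then obtain p where p: "p \<in> P" "\<tau> p = Min (\<tau> ` P)" by auto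
  have "\<tau> p < \<tau> q" if "q \<in> P - {p}" for q
  proof -
    have "\<tau> p \<le> \<tau> q" using that p assms by simp
    moreover have "\<tau> p \<noteq> \<tau> q" using that p assms(3) by (auto simp: inj_on_eq_iff)
    ultimately show ?thesis by simp
  qed
  then show thesis using that p unfolding min_at_def by blast
qed

section \<open>The greedy walk runs through the records\<close>

definition ltr_records :: "nat \<Rightarrow> (nat \<Rightarrow> nat) \<Rightarrow> nat set" where
  "ltr_records n \<tau> = {i \<in> {1..n}. \<forall>j \<in> {1..<i}. \<tau> i < \<tau> j}"

definition rtl_records :: "nat \<Rightarrow> (nat \<Rightarrow> nat) \<Rightarrow> nat set" where
  "rtl_records n \<tau> = {i \<in> {1..n}. \<forall>j \<in> {i<..n}. \<tau> i < \<tau> j}"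

lemma ltr_minima_eq_card: "ltr_minima n \<tau> = card (ltr_records n \<tau>)"
  unfolding ltr_minima_def ltr_records_def ..

lemma rtl_minima_eq_card: "rtl_minima n \<tau> = card (rtl_records n \<tau>)"
  unfolding rtl_minima_def rtl_records_def ..

lemma ltr_records_subset: "ltr_records n \<tau> \<subseteq> {1..n}"
  unfolding ltr_records_def by auto

lemma rtl_records_subset: "rtl_records n \<tau> \<subseteq> {1..n}"
  unfolding rtl_records_def by auto

lemma not_adj_across:
  assumes "x < w" "w < y" "\<tau> w < \<tau> x \<or> \<tau> w < \<tau> y"
  shows "\<not> adj n \<tau> x y"
  using assms unfolding adj_def inserted_edge_def by force

lemma adj_in_range: "adj n \<tau> x y \<Longrightarrow> y \<in> {1..n}"
  unfolding adj_def inserted_edge_def by auto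

lemma greedy_step_eqI:
  assumes "adj n \<tau> x y" and "\<And>z. adj n \<tau> x z \<Longrightarrow> z \<le> y"
  shows "greedy_step n \<tau> x = y"
proof -
  let ?d = "\<lambda>y::nat. \<bar>int y - int n\<bar>"
  have "y \<le> n" using adj_in_range[OF assms(1)] by auto
  then have "is_arg_min ?d (adj n \<tau> x) y"
    unfolding is_arg_min_def using assms adj_in_range by fastforce
  then have "is_arg_min ?d (adj n \<tau> x) (greedy_step n \<tau> x)"
    unfolding greedy_step_def arg_min_def by (rule someI)
  then have "adj n \<tau> x (greedy_step n \<tau> x)" "\<not> ?d y < ?d (greedy_step n \<tau> x)"
    using assms(1) unfolding is_arg_min_def by blast+
  then show ?thesis
    using assms(2) adj_in_range \<open>y \<le> n\<close> by fastforce
qed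

lemma greedy_step_eq_first_earlier:
  assumes "x \<in> {1..n}" "r \<in> {1..n}" "x < r" "\<tau> r < \<tau> x"
    and "\<And>z. x < z \<Longrightarrow> z < r \<Longrightarrow> \<tau> x < \<tau> z"
  shows "greedy_step n \<tau> x = r"
proof (rule greedy_step_eqI)
  have "\<not> \<tau> z < \<tau> x" if "x < z" "z < r" for z
    using assms(5)[OF that] by simp
  then have "inserted_edge n \<tau> x r"
    unfolding inserted_edge_def using assms(1-4) by blast
  then show "adj n \<tau> x r" unfolding adj_def ..
  show "z \<le> r" if "adj n \<tau> x z" for z
    using not_adj_across[of x r z \<tau> n] that assms(3,4) by (meson not_le)
qed

lemma greedy_step_eq_suffix_min:
  assumes "x \<in> {1..n}" "x < s" "s \<le> n" "\<tau> x < \<tau> s"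
    and "\<And>z. x < z \<Longrightarrow> z \<le> n \<Longrightarrow> z \<noteq> s \<Longrightarrow> \<tau> s < \<tau> z"
  shows "greedy_step n \<tau> x = s"
proof (rule greedy_step_eqI)
  have "\<not> \<tau> z < \<tau> s" if "x < z" "z < s" for z
    using assms(5)[of z] that assms(3) by simp
  then have "inserted_edge n \<tau> s x"
    unfolding inserted_edge_def using assms(1-4) by auto
  then show "adj n \<tau> x s" unfolding adj_def ..
  show "z \<le> s" if "adj n \<tau> x z" for z
  proof (rule ccontr)
    assume "\<not> z \<le> s"
    then show False
      using not_adj_across[of x s z \<tau> n] that assms adj_in_range[OF that] by auto
  qed
qed

lemma Least_funpow_eq_card:
  fixes f :: "nat \<Rightarrow> nat"
  assumes "finite V" "a \<in> V" "b \<in> V" "V \<subseteq> {a..b}"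
    and next_elem: "\<And>x. x \<in> V \<Longrightarrow> x < b \<Longrightarrow> f x \<in> V \<and> x < f x \<and> (\<forall>z\<in>V. x < z \<longrightarrow> f x \<le> z)"
  shows "(LEAST k. (f ^^ k) a = b) = card V - 1"
proof -
  define c where "c x = card {y\<in>V. y < x}" for x
  have c_less: "c x < c y" if "x \<in> V" "x < y" for x y
    unfolding c_def using that assms(1) by (intro psubset_card_mono) auto
  have c_b: "c b = card V - 1"
  proof -
    have "{y\<in>V. y < b} = V - {b}" using assms(4) by auto
    then show ?thesis unfolding c_def using assms(1,3) by simp
  qed
  have orbit: "(f ^^ k) a \<in> V \<and> c ((f ^^ k) a) = k" if "k \<le> c b" for k
    using that
  proof (induction k)
    case 0
    have "{y\<in>V. y < a} = {}" using assms(4) by auto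
    then show ?case using assms(2) unfolding c_def by simp
  next
    case (Suc k)
    define x where "x = (f ^^ k) a"
    have x: "x \<in> V" "c x = k" using Suc x_def by auto
    then have "x < b" using Suc.prems assms(4) by (metis Suc_le_lessD atLeastAtMost_iff le_neq_implies_less less_irrefl subsetD)
    then have fx: "f x \<in> V" "x < f x" "\<forall>z\<in>V. x < z \<longrightarrow> f x \<le> z" using next_elem x(1) by auto
    have "{y\<in>V. y < f x} = insert x {y\<in>V. y < x}"
      using fx x(1) by (auto simp: not_less_iff_gr_or_eq)
    then have "c (f x) = Suc (c x)" unfolding c_def using assms(1) by simp
    then show ?case using fx(1) x x_def by simp
  qed
  have hit: "(f ^^ k) a = b \<longleftrightarrow> k = c b" if "k \<le> c b" for k
  proof
    assume "(f ^^ k) a = b"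
    then show "k = c b" using orbit[OF that] by simp
  next
    assume k: "k = c b"
    have "(f ^^ k) a \<in> V" "c ((f ^^ k) a) = c b" using orbit[OF that] k by auto
    then show "(f ^^ k) a = b"
      using c_less assms(4) by (metis atLeastAtMost_iff le_neq_implies_less less_irrefl subsetD)
  qed
  have "(LEAST k. (f ^^ k) a = b) = c b"
  proof (rule Least_equality)
    show "(f ^^ c b) a = b" using hit by simp
    show "c b \<le> k" if "(f ^^ k) a = b" for k
      using hit that by (metis nat_le_linear)
  qed
  then show ?thesis using c_b by simp
qed

lemma min_in_ltr_records: "m \<in> {1..n} \<Longrightarrow> min_at \<tau> {1..n} m \<Longrightarrow> m \<in> ltr_records n \<tau>"
  unfolding ltr_records_def min_at_def by auto

lemma min_in_rtl_records: "m \<in> {1..n} \<Longrightarrow> min_at \<tau> {1..n} m \<Longrightarrow> m \<in> rtl_records n \<tau>"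
  unfolding rtl_records_def min_at_def by auto

lemma ltr_records_le_min:
  assumes "m \<in> {1..n}" "min_at \<tau> {1..n} m" "i \<in> ltr_records n \<tau>"
  shows "i \<le> m"
proof (rule ccontr)
  assume "\<not> i \<le> m"
  then have "\<tau> i < \<tau> m" "\<tau> m < \<tau> i"
    using assms unfolding ltr_records_def min_at_def by auto
  then show False by simp
qed

lemma rtl_records_ge_min:
  assumes "m \<in> {1..n}" "min_at \<tau> {1..n} m" "i \<in> rtl_records n \<tau>"
  shows "m \<le> i"
proof (rule ccontr)
  assume "\<not> m \<le> i"
  then have "\<tau> i < \<tau> m" "\<tau> m < \<tau> i"
    using assms unfolding rtl_records_def min_at_def by auto
  then show False by simp
qed

lemma greedy_step_from_ltr_record:
  assumes inj: "inj_on \<tau> {1..n}" and m: "m \<in> {1..n}" "min_at \<tau> {1..n} m"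
    and x: "x \<in> ltr_records n \<tau>" "x < m"
  defines "V \<equiv> ltr_records n \<tau> \<union> rtl_records n \<tau>"
  shows "greedy_step n \<tau> x \<in> V \<and> x < greedy_step n \<tau> x
    \<and> (\<forall>z\<in>V. x < z \<longrightarrow> greedy_step n \<tau> x \<le> z)"
proof -
  have x_range: "x \<in> {1..n}" using x unfolding ltr_records_def by auto
  have "\<tau> m < \<tau> x" using m x x_range unfolding min_at_def by auto
  define r where "r = (LEAST y. x < y \<and> \<tau> y < \<tau> x)"
  have r: "x < r" "\<tau> r < \<tau> x" "r \<le> m"
    using LeastI[of "\<lambda>y. x < y \<and> \<tau> y < \<tau> x" m] Least_le[of "\<lambda>y. x < y \<and> \<tau> y < \<tau> x" m]
      \<open>\<tau> m < \<tau> x\<close> x(2) unfolding r_def by auto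
  have r_range: "r \<in> {1..n}" using r m x_range by auto
  have between: "\<tau> x < \<tau> z" if "x < z" "z < r" for z
  proof -
    have "\<not> \<tau> z < \<tau> x" using not_less_Least[of z] that unfolding r_def by blast
    moreover have "\<tau> z \<noteq> \<tau> x"
      using inj that x_range r_range by (auto simp: inj_on_eq_iff)
    ultimately show ?thesis by simp
  qed
  have step: "greedy_step n \<tau> x = r"
    using greedy_step_eq_first_earlier[OF x_range r_range r(1,2) between] .
  have "r \<in> ltr_records n \<tau>"
    unfolding ltr_records_def
  proof (intro CollectI conjI ballI r_range)
    fix j assume j: "j \<in> {1..<r}"
    consider "j < x" | "j = x" | "x < j" by linarith
    then show "\<tau> r < \<tau> j"
    proof cases
      case 1
      then have "\<tau> x < \<tau> j" using x(1) j unfolding ltr_records_def by auto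
      then show ?thesis using r(2) by simp
    qed (use r between[of j] j in auto)
  qed
  moreover have "r \<le> z" if "z \<in> V" "x < z" for z
  proof (rule ccontr)
    assume "\<not> r \<le> z"
    then have "z \<notin> rtl_records n \<tau>" using rtl_records_ge_min[OF m] r(3) by fastforce
    then have "\<tau> z < \<tau> x" using that x_range unfolding V_def ltr_records_def by auto
    then show False using between[of z] \<open>\<not> r \<le> z\<close> that(2) by simp
  qed
  ultimately show ?thesis using step r(1) unfolding V_def by auto
qed

lemma greedy_step_from_rtl_record:
  assumes inj: "inj_on \<tau> {1..n}" and m: "m \<in> {1..n}" "min_at \<tau> {1..n} m"
    and x: "x \<in> rtl_records n \<tau>" "m \<le> x" "x < n"
  defines "V \<equiv> ltr_records n \<tau> \<union> rtl_records n \<tau>"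
  shows "greedy_step n \<tau> x \<in> V \<and> x < greedy_step n \<tau> x
    \<and> (\<forall>z\<in>V. x < z \<longrightarrow> greedy_step n \<tau> x \<le> z)"
proof -
  have x_range: "x \<in> {1..n}" using x unfolding rtl_records_def by auto
  have "inj_on \<tau> {x<..n}" by (rule inj_on_subset[OF inj]) (use x_range in auto)
  then obtain s where s: "s \<in> {x<..n}" "min_at \<tau> {x<..n} s"
    using ex_min_at[of "{x<..n}" \<tau>] x(3) by auto
  have "\<tau> x < \<tau> s" using x(1) s(1) unfolding rtl_records_def by auto
  then have step: "greedy_step n \<tau> x = s"
    using s x_range unfolding min_at_def by (intro greedy_step_eq_suffix_min) auto
  have "s \<in> rtl_records n \<tau>"
    using s x_range unfolding rtl_records_def min_at_def by auto
  moreover have "s \<le> z" if "z \<in> V" "x < z" for z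
  proof (rule ccontr)
    assume "\<not> s \<le> z"
    then have "z \<notin> ltr_records n \<tau>" using ltr_records_le_min[OF m] x(2) that(2) by fastforce
    then have "\<tau> z < \<tau> s" using that s(1) \<open>\<not> s \<le> z\<close> unfolding V_def rtl_records_def by auto
    moreover have "\<tau> s < \<tau> z" using s that \<open>\<not> s \<le> z\<close> unfolding min_at_def by auto
    ultimately show False by simp
  qed
  ultimately show ?thesis using step s(1) unfolding V_def by auto
qed

lemma greedy_steps_eq_records:
  assumes perm: "\<tau> permutes {1..n}" and "1 \<le> n"
  shows "greedy_steps n \<tau> + 2 = ltr_minima n \<tau> + rtl_minima n \<tau>"
proof -
  define V where "V = ltr_records n \<tau> \<union> rtl_records n \<tau>"
  have inj: "inj_on \<tau> {1..n}" using permutes_inj_on[OF perm] .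
  obtain m where m: "m \<in> {1..n}" "min_at \<tau> {1..n} m"
    using ex_min_at[of "{1..n}" \<tau>] inj \<open>1 \<le> n\<close> by auto
  have V_range: "V \<subseteq> {1..n}" unfolding V_def using ltr_records_subset rtl_records_subset by blast
  then have "finite V" by (rule finite_subset) simp
  have "1 \<in> V" "n \<in> V"
    unfolding V_def ltr_records_def rtl_records_def using \<open>1 \<le> n\<close> by auto
  have next_record: "greedy_step n \<tau> x \<in> V \<and> x < greedy_step n \<tau> x
      \<and> (\<forall>z\<in>V. x < z \<longrightarrow> greedy_step n \<tau> x \<le> z)" if "x \<in> V" "x < n" for x
  proof (cases "x < m")
    case True
    then have "x \<in> ltr_records n \<tau>" using that(1) rtl_records_ge_min[OF m] unfolding V_def by fastforce
    then show ?thesis using greedy_step_from_ltr_record[OF inj m] True unfolding V_def by blast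
  next
    case False
    then have "x \<in> rtl_records n \<tau>"
      using that(1) ltr_records_le_min[OF m] min_in_rtl_records[OF m] unfolding V_def
      by (metis Un_iff le_antisym not_less)
    then show ?thesis using greedy_step_from_rtl_record[OF inj m] False that(2) unfolding V_def by simp
  qed
  have "greedy_steps n \<tau> = card V - 1"
    unfolding greedy_steps_def
    by (rule Least_funpow_eq_card) (use \<open>finite V\<close> \<open>1 \<in> V\<close> \<open>n \<in> V\<close> V_range next_record in auto)
  moreover have "ltr_records n \<tau> \<inter> rtl_records n \<tau> = {m}"
    using ltr_records_le_min[OF m] rtl_records_ge_min[OF m] min_in_ltr_records[OF m] min_in_rtl_records[OF m]
    by fastforce
  then have "card V + 1 = ltr_minima n \<tau> + rtl_minima n \<tau>"
    using card_Un_Int[of "ltr_records n \<tau>" "rtl_records n \<tau>"] \<open>finite V\<close>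
    unfolding V_def ltr_minima_eq_card rtl_minima_eq_card by simp
  moreover have "card V \<ge> 1" using \<open>finite V\<close> \<open>1 \<in> V\<close> by (auto simp: Suc_le_eq card_gt_0_iff)
  ultimately show ?thesis by simp
qed

section \<open>Expectations over uniform permutations\<close>

lemma finite_perms: "finite (perms n)"
  unfolding perms_def by (rule finite_permutations) simp

lemma card_perms: "card (perms n) = fact n"
  unfolding perms_def by (rule card_permutations) auto

lemma E_perm_cong: "(\<And>\<tau>. \<tau> \<in> perms n \<Longrightarrow> f \<tau> = g \<tau>) \<Longrightarrow> E_perm n f = E_perm n g"
  unfolding E_perm_def by (simp cong: sum.cong)

lemma E_perm_add: "E_perm n (\<lambda>\<tau>. f \<tau> + g \<tau>) = E_perm n f + E_perm n g"
  unfolding E_perm_def by (simp add: sum.distrib add_divide_distrib)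

lemma E_perm_diff: "E_perm n (\<lambda>\<tau>. f \<tau> - g \<tau>) = E_perm n f - E_perm n g"
  unfolding E_perm_def by (simp add: sum_subtractf diff_divide_distrib)

lemma E_perm_mult_left: "E_perm n (\<lambda>\<tau>. c * f \<tau>) = c * E_perm n f"
  unfolding E_perm_def by (simp add: sum_distrib_left)

lemma E_perm_const: "E_perm n (\<lambda>\<tau>. c) = c"
  unfolding E_perm_def by (simp add: card_perms)

lemma E_perm_sum: "E_perm n (\<lambda>\<tau>. \<Sum>i\<in>I. f i \<tau>) = (\<Sum>i\<in>I. E_perm n (f i))"
  unfolding E_perm_def by (simp add: sum.swap[of _ I] sum_divide_distrib)

lemma Var_perm_cong: "(\<And>\<tau>. \<tau> \<in> perms n \<Longrightarrow> f \<tau> = g \<tau>) \<Longrightarrow> Var_perm n f = Var_perm n g"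
  unfolding Var_perm_def by (metis (no_types, lifting) E_perm_cong)

lemma Var_perm_eq: "Var_perm n f = E_perm n (\<lambda>\<tau>. (f \<tau>)\<^sup>2) - (E_perm n f)\<^sup>2"
proof -
  have "(f \<tau> - E_perm n f)\<^sup>2 = (f \<tau>)\<^sup>2 - 2 * E_perm n f * f \<tau> + (E_perm n f)\<^sup>2" for \<tau>
    by (simp add: power2_eq_square algebra_simps)
  then show ?thesis
    unfolding Var_perm_def by (simp add: E_perm_add E_perm_diff E_perm_mult_left E_perm_const power2_eq_square)
qed

lemma Cov_perm_eq: "Cov_perm n f g = E_perm n (\<lambda>\<tau>. f \<tau> * g \<tau>) - E_perm n f * E_perm n g"
proof -
  have "(f \<tau> - E_perm n f) * (g \<tau> - E_perm n g)
      = f \<tau> * g \<tau> - E_perm n g * f \<tau> - E_perm n f * g \<tau> + E_perm n f * E_perm n g" for \<tau>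
    by (simp add: algebra_simps)
  then show ?thesis
    unfolding Cov_perm_def by (simp add: E_perm_add E_perm_diff E_perm_mult_left E_perm_const)
qed

lemma Var_perm_add_diff_const:
  "Var_perm n (\<lambda>\<tau>. f \<tau> + g \<tau> - c) = Var_perm n f + Var_perm n g + 2 * Cov_perm n f g"
proof -
  let ?f = "\<lambda>\<tau>. f \<tau> - E_perm n f" and ?g = "\<lambda>\<tau>. g \<tau> - E_perm n g"
  have "E_perm n (\<lambda>\<tau>. f \<tau> + g \<tau> - c) = E_perm n f + E_perm n g - c"
    by (simp add: E_perm_add E_perm_diff E_perm_const)
  then have "(f \<tau> + g \<tau> - c - E_perm n (\<lambda>\<tau>. f \<tau> + g \<tau> - c))\<^sup>2
      = (?f \<tau>)\<^sup>2 + (?g \<tau>)\<^sup>2 + 2 * (?f \<tau> * ?g \<tau>)" for \<tau>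
    by (simp add: power2_eq_square algebra_simps)
  then show ?thesis
    unfolding Var_perm_def Cov_perm_def by (simp add: E_perm_add E_perm_mult_left)
qed

definition prob_perm :: "nat \<Rightarrow> ((nat \<Rightarrow> nat) \<Rightarrow> bool) \<Rightarrow> real" where
  "prob_perm n A = E_perm n (\<lambda>\<tau>. of_bool (A \<tau>))"

lemma prob_perm_eq_card: "prob_perm n A = card {\<tau>\<in>perms n. A \<tau>} / fact n"
proof -
  have "perms n \<inter> {\<tau>. A \<tau>} = {\<tau>\<in>perms n. A \<tau>}" by auto
  then show ?thesis unfolding prob_perm_def E_perm_def by (simp add: finite_perms card_perms)
qed

lemma prob_perm_True: "prob_perm n (\<lambda>\<tau>. True) = 1"
  unfolding prob_perm_def by (simp add: E_perm_const)

lemma card_eq_sum_of_bool: "finite I \<Longrightarrow> X \<subseteq> I \<Longrightarrow> real (card X) = (\<Sum>i\<in>I. of_bool (i \<in> X))"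
  by (simp add: Int_absorb1)

lemma E_perm_card:
  assumes "finite I" "\<And>\<tau>. X \<tau> \<subseteq> I"
  shows "E_perm n (\<lambda>\<tau>. real (card (X \<tau>))) = (\<Sum>i\<in>I. prob_perm n (\<lambda>\<tau>. i \<in> X \<tau>))"
proof -
  have "E_perm n (\<lambda>\<tau>. real (card (X \<tau>))) = E_perm n (\<lambda>\<tau>. \<Sum>i\<in>I. of_bool (i \<in> X \<tau>))"
    by (simp only: card_eq_sum_of_bool[OF assms])
  then show ?thesis by (simp only: E_perm_sum prob_perm_def)
qed

lemma E_perm_card_mult_card:
  assumes "finite I" "\<And>\<tau>. X \<tau> \<subseteq> I" "finite J" "\<And>\<tau>. Y \<tau> \<subseteq> J"
  shows "E_perm n (\<lambda>\<tau>. real (card (X \<tau>)) * real (card (Y \<tau>)))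
    = (\<Sum>i\<in>I. \<Sum>j\<in>J. prob_perm n (\<lambda>\<tau>. i \<in> X \<tau> \<and> j \<in> Y \<tau>))"
proof -
  have "E_perm n (\<lambda>\<tau>. real (card (X \<tau>)) * real (card (Y \<tau>)))
      = E_perm n (\<lambda>\<tau>. \<Sum>i\<in>I. \<Sum>j\<in>J. of_bool (i \<in> X \<tau> \<and> j \<in> Y \<tau>))"
    by (simp only: card_eq_sum_of_bool[OF assms(1,2)] card_eq_sum_of_bool[OF assms(3,4)]
        sum_product of_bool_conj)
  then show ?thesis by (simp only: E_perm_sum prob_perm_def)
qed

lemma Var_perm_card:
  fixes I :: "'a::linorder set"
  assumes "finite I" "\<And>\<tau>. X \<tau> \<subseteq> I"
    and indep: "\<And>i j. i \<in> I \<Longrightarrow> j \<in> I \<Longrightarrow> i < j \<Longrightarrow>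
      prob_perm n (\<lambda>\<tau>. i \<in> X \<tau> \<and> j \<in> X \<tau>)
        = prob_perm n (\<lambda>\<tau>. i \<in> X \<tau>) * prob_perm n (\<lambda>\<tau>. j \<in> X \<tau>)"
  shows "Var_perm n (\<lambda>\<tau>. real (card (X \<tau>)))
    = (\<Sum>i\<in>I. prob_perm n (\<lambda>\<tau>. i \<in> X \<tau>)) - (\<Sum>i\<in>I. (prob_perm n (\<lambda>\<tau>. i \<in> X \<tau>))\<^sup>2)"
proof -
  let ?p = "\<lambda>i. prob_perm n (\<lambda>\<tau>. i \<in> X \<tau>)"
  have pair: "prob_perm n (\<lambda>\<tau>. i \<in> X \<tau> \<and> j \<in> X \<tau>)
      = ?p i * ?p j + (if i = j then ?p i - (?p i)\<^sup>2 else 0)" if "i \<in> I" "j \<in> I" for i j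
  proof (cases i j rule: linorder_cases)
    case greater
    then show ?thesis using indep[OF that(2,1)] by (auto simp: conj_commute mult.commute)
  qed (use indep[OF that] in \<open>auto simp: power2_eq_square\<close>)
  have "E_perm n (\<lambda>\<tau>. (real (card (X \<tau>)))\<^sup>2)
      = (\<Sum>i\<in>I. \<Sum>j\<in>I. prob_perm n (\<lambda>\<tau>. i \<in> X \<tau> \<and> j \<in> X \<tau>))"
    unfolding power2_eq_square by (rule E_perm_card_mult_card[OF assms(1,2,1,2)])
  also have "\<dots> = (\<Sum>i\<in>I. \<Sum>j\<in>I. ?p i * ?p j + (if i = j then ?p i - (?p i)\<^sup>2 else 0))"
    using pair by (intro sum.cong refl)
  also have "\<dots> = (\<Sum>i\<in>I. ?p i)\<^sup>2 + (\<Sum>i\<in>I. ?p i - (?p i)\<^sup>2)"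
    using assms(1) by (simp add: sum.distrib power2_eq_square sum_product)
  finally show ?thesis
    unfolding Var_perm_eq E_perm_card[OF assms(1,2)] by (simp add: sum_subtractf)
qed

section \<open>Record indicators are pairwise independent\<close>

lemma min_at_comp_inj:
  "inj \<pi> \<Longrightarrow> min_at (\<tau> \<circ> \<pi>) Q q \<longleftrightarrow> min_at \<tau> (\<pi> ` Q) (\<pi> q)"
  unfolding min_at_def by (auto simp: inj_eq)

lemma min_at_comp_transpose:
  "a \<in> Q \<longleftrightarrow> b \<in> Q \<Longrightarrow> min_at (\<tau> \<circ> Transposition.transpose a b) Q q
    \<longleftrightarrow> min_at \<tau> Q (Transposition.transpose a b q)"
  by (simp add: min_at_comp_inj inj_transpose)

lemma min_at_comp_transpose_other:
  "q \<noteq> a \<Longrightarrow> q \<noteq> b \<Longrightarrow> a \<in> Q \<longleftrightarrow> b \<in> Q \<Longrightarrow>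
    min_at (\<tau> \<circ> Transposition.transpose a b) Q q \<longleftrightarrow> min_at \<tau> Q q"
  by (simp add: min_at_comp_transpose)

lemma card_min_at:
  assumes E: "E \<subseteq> perms n" and P: "P \<subseteq> {1..n}" "p \<in> P"
    and closed: "\<And>\<tau> a b. \<tau> \<in> E \<Longrightarrow> a \<in> P \<Longrightarrow> b \<in> P \<Longrightarrow> \<tau> \<circ> Transposition.transpose a b \<in> E"
  shows "card {\<tau>\<in>E. min_at \<tau> P p} * card P = card E"
proof -
  define F where "F q = {\<tau>\<in>E. min_at \<tau> P q}" for q
  have "finite P" using P(1) finite_subset by blast
  have "finite E" using E finite_perms finite_subset by blast
  have cover: "E = (\<Union>q\<in>P. F q)"
  proof (intro equalityI subsetI)
    fix \<tau> assume "\<tau> \<in> E"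
    then have "inj_on \<tau> P" using E unfolding perms_def by (auto intro: permutes_inj_on)
    then obtain q where "q \<in> P" "min_at \<tau> P q" using ex_min_at \<open>finite P\<close> P(2) by blast
    then show "\<tau> \<in> (\<Union>q\<in>P. F q)" using \<open>\<tau> \<in> E\<close> unfolding F_def by auto
  qed (auto simp: F_def)
  have disjoint: "F q \<inter> F q' = {}" if "q \<in> P" "q' \<in> P" "q \<noteq> q'" for q q'
    using that unfolding F_def min_at_def by (auto dest: less_asym)
  have same_card: "card (F q) = card (F p)" if "q \<in> P" for q
  proof -
    let ?swap = "\<lambda>\<tau>. \<tau> \<circ> Transposition.transpose p q"
    have "bij_betw ?swap (F p) (F q)"
      by (rule bij_betw_byWitness[where f' = ?swap])
        (use that P(2) closed in \<open>auto simp: F_def comp_assoc min_at_comp_transpose\<close>)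
    then show ?thesis by (simp add: bij_betw_same_card)
  qed
  have "card E = (\<Sum>q\<in>P. card (F q))"
    unfolding cover
    by (rule card_UN_disjoint) (use \<open>finite P\<close> \<open>finite E\<close> disjoint in \<open>auto simp: F_def\<close>)
  also have "\<dots> = card P * card (F p)" using same_card by simp
  finally show ?thesis unfolding F_def by simp
qed

lemma prob_perm_min_at_conj:
  assumes P: "P \<subseteq> {1..n}" "p \<in> P"
    and invariant: "\<And>\<tau> a b. \<tau> \<in> perms n \<Longrightarrow> a \<in> P \<Longrightarrow> b \<in> P \<Longrightarrow> B \<tau> \<Longrightarrow>
      B (\<tau> \<circ> Transposition.transpose a b)"
  shows "prob_perm n (\<lambda>\<tau>. min_at \<tau> P p \<and> B \<tau>) = prob_perm n B / card P"
proof -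
  have "card {\<tau>\<in>{\<tau>\<in>perms n. B \<tau>}. min_at \<tau> P p} * card P = card {\<tau>\<in>perms n. B \<tau>}"
  proof (rule card_min_at[OF _ P])
    show "\<tau> \<circ> Transposition.transpose a b \<in> {\<tau>\<in>perms n. B \<tau>}"
      if "\<tau> \<in> {\<tau>\<in>perms n. B \<tau>}" "a \<in> P" "b \<in> P" for \<tau> a b
    proof -
      have "Transposition.transpose a b permutes {1..n}" using that P(1) by (intro permutes_swap_id) auto
      then show ?thesis using that invariant unfolding perms_def by (auto intro: permutes_compose)
    qed
  qed auto
  moreover have "{\<tau>\<in>{\<tau>\<in>perms n. B \<tau>}. min_at \<tau> P p} = {\<tau>\<in>perms n. min_at \<tau> P p \<and> B \<tau>}" by auto
  moreover have "card P > 0" using P finite_subset[OF P(1)] by (auto simp: card_gt_0_iff)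
  ultimately show ?thesis unfolding prob_perm_eq_card by (simp add: field_simps of_nat_mult[symmetric])
qed

lemma prob_perm_min_at: "P \<subseteq> {1..n} \<Longrightarrow> p \<in> P \<Longrightarrow> prob_perm n (\<lambda>\<tau>. min_at \<tau> P p) = 1 / card P"
  using prob_perm_min_at_conj[of P n p "\<lambda>\<tau>. True"] by (simp add: prob_perm_True)

lemma mem_ltr_records_iff: "i \<in> {1..n} \<Longrightarrow> i \<in> ltr_records n \<tau> \<longleftrightarrow> min_at \<tau> {1..i} i"
  unfolding ltr_records_def min_at_def by auto

lemma mem_rtl_records_iff: "i \<in> {1..n} \<Longrightarrow> i \<in> rtl_records n \<tau> \<longleftrightarrow> min_at \<tau> {i..n} i"
  unfolding rtl_records_def min_at_def by auto

lemma prob_ltr_record: "i \<in> {1..n} \<Longrightarrow> prob_perm n (\<lambda>\<tau>. i \<in> ltr_records n \<tau>) = 1 / i"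
  by (simp add: mem_ltr_records_iff prob_perm_min_at)

lemma prob_rtl_record: "i \<in> {1..n} \<Longrightarrow> prob_perm n (\<lambda>\<tau>. i \<in> rtl_records n \<tau>) = 1 / (n + 1 - i)"
  by (simp add: mem_rtl_records_iff prob_perm_min_at Suc_diff_le)

lemma prob_ltr_records_indep:
  assumes "1 \<le> i" "i < j" "j \<le> n"
  shows "prob_perm n (\<lambda>\<tau>. i \<in> ltr_records n \<tau> \<and> j \<in> ltr_records n \<tau>)
    = prob_perm n (\<lambda>\<tau>. i \<in> ltr_records n \<tau>) * prob_perm n (\<lambda>\<tau>. j \<in> ltr_records n \<tau>)"
proof -
  have "prob_perm n (\<lambda>\<tau>. min_at \<tau> {1..i} i \<and> min_at \<tau> {1..j} j)
      = prob_perm n (\<lambda>\<tau>. min_at \<tau> {1..j} j) / card {1..i}"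
  proof (rule prob_perm_min_at_conj)
    fix \<tau> a b assume "a \<in> {1..i}" "b \<in> {1..i}" "min_at \<tau> {1..j} j"
    then show "min_at (\<tau> \<circ> Transposition.transpose a b) {1..j} j"
      using assms by (subst min_at_comp_transpose_other) auto
  qed (use assms in auto)
  then show ?thesis using assms by (simp add: mem_ltr_records_iff prob_perm_min_at)
qed

lemma prob_rtl_records_indep:
  assumes "1 \<le> i" "i < j" "j \<le> n"
  shows "prob_perm n (\<lambda>\<tau>. i \<in> rtl_records n \<tau> \<and> j \<in> rtl_records n \<tau>)
    = prob_perm n (\<lambda>\<tau>. i \<in> rtl_records n \<tau>) * prob_perm n (\<lambda>\<tau>. j \<in> rtl_records n \<tau>)"
proof -
  have "prob_perm n (\<lambda>\<tau>. min_at \<tau> {j..n} j \<and> min_at \<tau> {i..n} i)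
      = prob_perm n (\<lambda>\<tau>. min_at \<tau> {i..n} i) / card {j..n}"
  proof (rule prob_perm_min_at_conj)
    fix \<tau> a b assume "a \<in> {j..n}" "b \<in> {j..n}" "min_at \<tau> {i..n} i"
    then show "min_at (\<tau> \<circ> Transposition.transpose a b) {i..n} i"
      using assms by (subst min_at_comp_transpose_other) auto
  qed (use assms in auto)
  then show ?thesis using assms by (simp add: mem_rtl_records_iff prob_perm_min_at conj_commute)
qed

lemma prob_ltr_rtl_records_indep:
  assumes "1 \<le> i" "i < j" "j \<le> n"
  shows "prob_perm n (\<lambda>\<tau>. i \<in> ltr_records n \<tau> \<and> j \<in> rtl_records n \<tau>)
    = prob_perm n (\<lambda>\<tau>. i \<in> ltr_records n \<tau>) * prob_perm n (\<lambda>\<tau>. j \<in> rtl_records n \<tau>)"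
proof -
  have "prob_perm n (\<lambda>\<tau>. min_at \<tau> {1..i} i \<and> min_at \<tau> {j..n} j)
      = prob_perm n (\<lambda>\<tau>. min_at \<tau> {j..n} j) / card {1..i}"
  proof (rule prob_perm_min_at_conj)
    fix \<tau> a b assume "a \<in> {1..i}" "b \<in> {1..i}" "min_at \<tau> {j..n} j"
    then show "min_at (\<tau> \<circ> Transposition.transpose a b) {j..n} j"
      using assms by (subst min_at_comp_transpose_other) auto
  qed (use assms in auto)
  then show ?thesis using assms by (simp add: mem_ltr_records_iff mem_rtl_records_iff prob_perm_min_at)
qed

lemma prob_ltr_rtl_records:
  assumes "i \<in> {1..n}" "j \<in> {1..n}"
  shows "prob_perm n (\<lambda>\<tau>. i \<in> ltr_records n \<tau> \<and> j \<in> rtl_records n \<tau>)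
    = (if i < j then 1 / (real i * real (n + 1 - j)) else 0) + (if i = j then 1 / n else 0)"
proof (cases i j rule: linorder_cases)
  case less
  then show ?thesis using assms by (simp add: prob_ltr_rtl_records_indep prob_ltr_record prob_rtl_record)
next
  case equal
  have "{1..n} - {i} = {1..<i} \<union> {i<..n}" using assms by auto
  then have "i \<in> ltr_records n \<tau> \<and> i \<in> rtl_records n \<tau> \<longleftrightarrow> min_at \<tau> {1..n} i" for \<tau>
    using assms unfolding ltr_records_def rtl_records_def min_at_def by auto
  then show ?thesis using assms equal by (simp add: prob_perm_min_at)
next
  case greater
  have "\<tau> i < \<tau> j \<and> \<tau> j < \<tau> i" if "i \<in> ltr_records n \<tau>" "j \<in> rtl_records n \<tau>" for \<tau>
    using that greater unfolding ltr_records_def rtl_records_def by auto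
  then have empty: "{\<tau>\<in>perms n. i \<in> ltr_records n \<tau> \<and> j \<in> rtl_records n \<tau>} = {}"
    by (auto dest: less_asym)
  show ?thesis unfolding prob_perm_eq_card empty using greater by simp
qed

section \<open>Moments of the record counts\<close>

lemma sum_reflect:
  fixes f :: "nat \<Rightarrow> 'a::comm_monoid_add"
  shows "(\<Sum>i=1..n. f (n + 1 - i)) = (\<Sum>i=1..n. f i)"
  using sum.atLeastAtMost_rev[of f 1 n] by simp

lemma E_ltr_minima: "E_perm n (\<lambda>\<tau>. real (ltr_minima n \<tau>)) = harm n"
  unfolding ltr_minima_eq_card E_perm_card[OF finite_atLeastAtMost ltr_records_subset]
  by (simp add: prob_ltr_record harm_def inverse_eq_divide)

lemma Var_ltr_minima: "Var_perm n (\<lambda>\<tau>. real (ltr_minima n \<tau>)) = harm n - (\<Sum>i=1..n. 1 / (real i)\<^sup>2)"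
  unfolding ltr_minima_eq_card
  by (subst Var_perm_card[OF finite_atLeastAtMost ltr_records_subset])
    (auto simp: prob_ltr_records_indep prob_ltr_record harm_def inverse_eq_divide power_one_over)

lemma E_rtl_minima: "E_perm n (\<lambda>\<tau>. real (rtl_minima n \<tau>)) = harm n"
proof -
  have "E_perm n (\<lambda>\<tau>. real (rtl_minima n \<tau>)) = (\<Sum>i=1..n. 1 / real (n + 1 - i))"
    unfolding rtl_minima_eq_card E_perm_card[OF finite_atLeastAtMost rtl_records_subset]
    by (simp add: prob_rtl_record add_ac)
  also have "\<dots> = harm n"
    using sum_reflect[of "\<lambda>i. 1 / real i" n] by (simp add: harm_def inverse_eq_divide)
  finally show ?thesis .
qed

lemma Var_rtl_minima: "Var_perm n (\<lambda>\<tau>. real (rtl_minima n \<tau>)) = harm n - (\<Sum>i=1..n. 1 / (real i)\<^sup>2)"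
proof -
  have "Var_perm n (\<lambda>\<tau>. real (rtl_minima n \<tau>))
      = (\<Sum>i=1..n. 1 / real (n + 1 - i)) - (\<Sum>i=1..n. 1 / (real (n + 1 - i))\<^sup>2)"
    unfolding rtl_minima_eq_card
    by (subst Var_perm_card[OF finite_atLeastAtMost rtl_records_subset])
      (auto simp: prob_rtl_records_indep prob_rtl_record power_one_over add_ac)
  also have "\<dots> = harm n - (\<Sum>i=1..n. 1 / (real i)\<^sup>2)"
    using sum_reflect[of "\<lambda>i. 1 / real i" n] sum_reflect[of "\<lambda>i. 1 / (real i)\<^sup>2" n]
    by (simp add: harm_def inverse_eq_divide)
  finally show ?thesis .
qed

lemma Cov_ltr_rtl_minima:
  assumes "1 \<le> n"
  shows "Cov_perm n (\<lambda>\<tau>. real (ltr_minima n \<tau>)) (\<lambda>\<tau>. real (rtl_minima n \<tau>))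
    = 1 - (\<Sum>i=1..n. \<Sum>j=1..n. if j \<le> i then 1 / (real i * real (n + 1 - j)) else 0)"
proof -
  let ?f = "\<lambda>i j. 1 / (real i * real (n + 1 - j))"
  have "E_perm n (\<lambda>\<tau>. real (ltr_minima n \<tau>) * real (rtl_minima n \<tau>))
      = (\<Sum>i=1..n. \<Sum>j=1..n. (if i < j then ?f i j else 0) + (if i = j then 1 / n else 0))"
    unfolding ltr_minima_eq_card rtl_minima_eq_card
      E_perm_card_mult_card[OF finite_atLeastAtMost ltr_records_subset finite_atLeastAtMost rtl_records_subset]
    by (intro sum.cong refl) (simp add: prob_ltr_rtl_records)
  also have "\<dots> = (\<Sum>i=1..n. \<Sum>j=1..n. if i < j then ?f i j else 0) + 1"
    using assms by (simp add: sum.distrib)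
  finally have E_product: "E_perm n (\<lambda>\<tau>. real (ltr_minima n \<tau>) * real (rtl_minima n \<tau>))
      = (\<Sum>i=1..n. \<Sum>j=1..n. if i < j then ?f i j else 0) + 1" .
  have "E_perm n (\<lambda>\<tau>. real (ltr_minima n \<tau>)) * E_perm n (\<lambda>\<tau>. real (rtl_minima n \<tau>))
      = (\<Sum>i=1..n. 1 / real i) * (\<Sum>j=1..n. 1 / real (n + 1 - j))"
    unfolding ltr_minima_eq_card rtl_minima_eq_card E_perm_card[OF finite_atLeastAtMost ltr_records_subset]
      E_perm_card[OF finite_atLeastAtMost rtl_records_subset]
    by (simp add: prob_ltr_record prob_rtl_record add_ac)
  also have "\<dots> = (\<Sum>i=1..n. \<Sum>j=1..n. ?f i j)"
    unfolding sum_product by (simp only: times_divide_eq_right divide_divide_eq_left mult_1_right)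
  also have "\<dots> = (\<Sum>i=1..n. \<Sum>j=1..n. if i < j then ?f i j else 0)
      + (\<Sum>i=1..n. \<Sum>j=1..n. if j \<le> i then ?f i j else 0)"
    unfolding sum.distrib[symmetric] by (intro sum.cong refl) auto
  finally show ?thesis unfolding Cov_perm_eq E_product by simp
qed

lemma cross_reciprocal_sum_le:
  "(\<Sum>i=1..n. \<Sum>j=1..n. if j \<le> i then 1 / (real i * real (n + 1 - j)) else 0) \<le> 2"
proof -
  let ?M = "real n + 1"
  have "(\<Sum>i=1..n. \<Sum>j=1..n. if j \<le> i then 1 / (real i * real (n + 1 - j)) else 0)
      \<le> (\<Sum>i=1..n. \<Sum>j=1..n. (if j \<le> i then 1 / real i else 0) / ?M
                               + (if j \<le> i then 1 / real (n + 1 - j) else 0) / ?M)"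
  proof (intro sum_mono)
    fix i j assume "i \<in> {1..n}" "j \<in> {1..n}"
    show "(if j \<le> i then 1 / (real i * real (n + 1 - j)) else 0)
        \<le> (if j \<le> i then 1 / real i else 0) / ?M + (if j \<le> i then 1 / real (n + 1 - j) else 0) / ?M"
    proof (cases "j \<le> i")
      case True
      define x y where "x = real i" and "y = real (n + 1 - j)"
      have "x > 0" "y > 0" "?M \<le> x + y"
        using True \<open>i \<in> {1..n}\<close> \<open>j \<in> {1..n}\<close> by (auto simp: x_def y_def)
      then have "1 / (x * y) = (1 / x + 1 / y) / (x + y)"
        by (simp add: field_simps) (smt (verit) mult_pos_pos)
      also have "\<dots> \<le> (1 / x + 1 / y) / ?M"
        using \<open>x > 0\<close> \<open>y > 0\<close> \<open>?M \<le> x + y\<close> by (intro divide_left_mono) auto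
      finally show ?thesis using True by (simp add: x_def y_def add_divide_distrib)
    qed simp
  qed
  also have "\<dots> = ((\<Sum>i=1..n. \<Sum>j=1..n. if j \<le> i then 1 / real i else 0)
      + (\<Sum>i=1..n. \<Sum>j=1..n. if j \<le> i then 1 / real (n + 1 - j) else 0)) / ?M"
    by (simp add: sum.distrib sum_divide_distrib add_divide_distrib)
  also have "(\<Sum>i=1..n. \<Sum>j=1..n. if j \<le> i then 1 / real i else 0) = real n"
  proof -
    have "(\<Sum>j=1..n. if j \<le> i then 1 / real i else 0) = 1" if "i \<in> {1..n}" for i
    proof -
      have "{1..n} \<inter> {j. j \<le> i} = {1..i}" using that by auto
      then show ?thesis using that by (simp add: sum.If_cases)
    qed
    then show ?thesis by simp
  qed
  also have "(\<Sum>i=1..n. \<Sum>j=1..n. if j \<le> i then 1 / real (n + 1 - j) else 0) = real n"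
  proof -
    have "(\<Sum>i=1..n. if j \<le> i then 1 / real (n + 1 - j) else 0) = 1" if "j \<in> {1..n}" for j
    proof -
      have "{1..n} \<inter> {i. j \<le> i} = {j..n}" using that by auto
      then show ?thesis using that by (simp add: sum.If_cases Suc_diff_le)
    qed
    then show ?thesis by (subst sum.swap) simp
  qed
  also have "(real n + real n) / ?M \<le> 2" by (simp add: divide_le_eq)
  finally show ?thesis .
qed

lemma abs_Cov_ltr_rtl_minima_le:
  assumes "1 \<le> n"
  shows "\<bar>Cov_perm n (\<lambda>\<tau>. real (ltr_minima n \<tau>)) (\<lambda>\<tau>. real (rtl_minima n \<tau>))\<bar> \<le> 1"
proof -
  have "0 \<le> (\<Sum>i=1..n. \<Sum>j=1..n. if j \<le> i then 1 / (real i * real (n + 1 - j)) else 0)"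
    by (intro sum_nonneg) auto
  then show ?thesis using Cov_ltr_rtl_minima[OF assms] cross_reciprocal_sum_le[of n] by simp
qed

lemma harm_minus_ln_bounds:
  assumes "1 \<le> n"
  shows "0 \<le> harm n - ln (real n)" "harm n - ln (real n) \<le> 1"
  using euler_mascheroni_sequence_nonneg[of n] euler_mascheroni_sequence_decreasing[of 1 n] assms
  by (simp_all add: harm_def)

lemma sum_inverse_squares_le: "(\<Sum>i=1..n. 1 / (real i)\<^sup>2) \<le> (\<Sum>i. 1 / (real i)\<^sup>2)"
proof -
  have "summable (\<lambda>i. 1 / (real i)\<^sup>2)"
    using inverse_power_summable[of 2, where 'a = real] by (simp add: inverse_eq_divide)
  then show ?thesis by (rule sum_le_suminf) auto
qed

lemma real_greedy_steps_eq:
  "\<tau> \<in> perms n \<Longrightarrow> 1 \<le> n \<Longrightarrow>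
    real (greedy_steps n \<tau>) = real (ltr_minima n \<tau>) + real (rtl_minima n \<tau>) - 2"
  using greedy_steps_eq_records[of \<tau> n] unfolding perms_def by (simp flip: of_nat_add)

lemma E_greedy_steps: "1 \<le> n \<Longrightarrow> E_perm n (\<lambda>\<tau>. real (greedy_steps n \<tau>)) = 2 * harm n - 2"
  using real_greedy_steps_eq[of _ n]
  by (simp add: E_perm_cong[of n "\<lambda>\<tau>. real (greedy_steps n \<tau>)"] E_perm_add E_perm_diff E_perm_const
      E_ltr_minima E_rtl_minima)

lemma Var_greedy_steps:
  "1 \<le> n \<Longrightarrow> Var_perm n (\<lambda>\<tau>. real (greedy_steps n \<tau>)) = 2 * (harm n - (\<Sum>i=1..n. 1 / (real i)\<^sup>2))
    + 2 * Cov_perm n (\<lambda>\<tau>. real (ltr_minima n \<tau>)) (\<lambda>\<tau>. real (rtl_minima n \<tau>))"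
  using real_greedy_steps_eq[of _ n]
  by (simp add: Var_perm_cong[of n "\<lambda>\<tau>. real (greedy_steps n \<tau>)"] Var_perm_add_diff_const
      Var_ltr_minima Var_rtl_minima)

lemma E_greedy_steps_asymptotics:
  "(\<lambda>n. E_perm n (\<lambda>\<tau>. real (greedy_steps n \<tau>)) - (2 * ln (real n) + 2 * euler_mascheroni - 2))
    \<longlonglongrightarrow> 0"
proof -
  have "(\<lambda>n. 2 * ((harm n - ln (real n)) - euler_mascheroni)) \<longlonglongrightarrow> 2 * (euler_mascheroni - euler_mascheroni)"
    by (intro tendsto_intros euler_mascheroni_LIMSEQ)
  moreover have "\<forall>\<^sub>F n in sequentially. 2 * ((harm n - ln (real n)) - euler_mascheroni)
      = E_perm n (\<lambda>\<tau>. real (greedy_steps n \<tau>)) - (2 * ln (real n) + 2 * euler_mascheroni - 2)"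
    using eventually_ge_at_top[of "1::nat"] by eventually_elim (simp add: E_greedy_steps algebra_simps)
  ultimately show ?thesis by (simp add: Lim_transform_eventually)
qed

lemma Var_greedy_steps_asymptotics:
  "(\<lambda>n. Var_perm n (\<lambda>\<tau>. real (greedy_steps n \<tau>)) - 2 * ln (real n)) \<in> O(\<lambda>_. 1)"
proof -
  let ?C = "\<Sum>i. 1 / (real i)\<^sup>2"
  have "\<forall>\<^sub>F n in sequentially.
      norm (Var_perm n (\<lambda>\<tau>. real (greedy_steps n \<tau>)) - 2 * ln (real n)) \<le> (4 + 2 * ?C) * norm (1::real)"
    using eventually_ge_at_top[of "1::nat"]
  proof eventually_elim
    case (elim n)
    then show ?case
      using Var_greedy_steps[OF elim] harm_minus_ln_bounds[OF elim] abs_Cov_ltr_rtl_minima_le[OF elim]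
        sum_inverse_squares_le[of n] sum_nonneg[of "{1..n}" "\<lambda>i. 1 / (real i)\<^sup>2"]
      by (simp add: abs_le_iff)
  qed
  then show ?thesis by (rule bigoI)
qed

theorem theorem2:
  shows "(\<forall>n\<ge>1. E_perm n (\<lambda>\<tau>. real (greedy_steps n \<tau>)) = 2 * harm n - 2)
    \<and> ((\<lambda>n. E_perm n (\<lambda>\<tau>. real (greedy_steps n \<tau>))
            - (2 * ln (real n) + 2 * euler_mascheroni - 2)) \<longlonglongrightarrow> 0)
    \<and> (\<forall>n\<ge>1. Var_perm n (\<lambda>\<tau>. real (greedy_steps n \<tau>))
            = 2 * (harm n - (\<Sum>i=1..n. 1 / (real i)\<^sup>2))
              + 2 * Cov_perm n (\<lambda>\<tau>. real (ltr_minima n \<tau>)) (\<lambda>\<tau>. real (rtl_minima n \<tau>)))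
    \<and> (\<lambda>n. Var_perm n (\<lambda>\<tau>. real (greedy_steps n \<tau>)) - 2 * ln (real n)) \<in> O(\<lambda>_. 1)"
  using E_greedy_steps E_greedy_steps_asymptotics Var_greedy_steps Var_greedy_steps_asymptotics
  by blast

end
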